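(* Let $K\ge3$. If for all $k\in[K]$ there is a function $g_k$ (defined on $[0,1]$) with $f_k({\bm{p}})=g_k\!\left(\frac{p_k}{|{\bm{p}}|}\right)$ for all ${\bm{p}}\in\mathbb{R}^K_{\ge0}\setminus\{\mathbf{0}\}$, then the Conservation Condition $$(f_1({\bm{p}}),\dots,f_K({\bm{p}}))=\nabla L^{\mathrm{same}}({\bm{p}})\quad\text{for all }{\bm{p}}\in\mathbb{R}^K_{\ge0}\setminus\{\mathbf{0}\}$$ holds if and only if all $g_k$ are constant functions.
   Context: Setting: distributions $\mathcal{D}_1,\dots,\mathcal{D}_K$ on $\mathcal{Z}$, a loss $\ell(h,{\bm{z}})$, $N\ge1$, and a learning algorithm $\mathcal{A}:\mathcal{Z}^N\to\mathcal{H}$. For ${\bm{q}}\in\Delta_K=\{{\bm{r}}\ge0:\sum_kr_k=1\}$ let $\mathcal{D}_{\bm{q}}=\sum_kq_k\mathcal{D}_k$ and $\bar e_k({\bm{q}})=\mathbb{E}_{S\sim\mathcal{D}_{\bm{q}}^N}\mathbb{E}_{{\bm{z}}\sim\mathcal{D}_k}[\ell(\mathcal{A}(S),{\bm{z}})]$. For ${\bm{p}}\in\mathbb{R}^K_{\ge0}\setminus\{\mathbf{0}\}$, $|{\bm{p}}|=\sum_kp_k$, $f_k({\bm{p}})=\bar e_k({\bm{p}}/|{\bm{p}}|)$ and $L^{\mathrm{same}}({\bm{p}})=\sum_kp_kf_k({\bm{p}})$. *)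

theory Defs
  imports "HOL-Probability.Probability"
begin

text \<open>Index set [K] is modelled by a finite type 'k, so K = CARD('k).\<close>

definition prob_simplex :: "(real^'k) set" where
  "prob_simplex = {q. (\<forall>k. 0 \<le> q$k) \<and> (\<Sum>k\<in>UNIV. q$k) = 1}"

definition posorth :: "(real^'k) set" where
  "posorth = {p. (\<forall>k. 0 \<le> p$k) \<and> p \<noteq> 0}"

definition mass :: "real^'k \<Rightarrow> real" where
  "mass p = (\<Sum>k\<in>UNIV. p$k)"

definition mixture :: "'z measure \<Rightarrow> ('k::finite \<Rightarrow> 'z measure) \<Rightarrow> real^'k \<Rightarrow> 'z measure" where
  "mixture M D q = measure_of (space M) (sets M)
     (\<lambda>A. \<Sum>k\<in>UNIV. ennreal (q$k) * emeasure (D k) A)"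

definition ebar :: "'z measure \<Rightarrow> ('k::finite \<Rightarrow> 'z measure) \<Rightarrow> nat \<Rightarrow> ('h \<Rightarrow> 'z \<Rightarrow> real)
    \<Rightarrow> ((nat \<Rightarrow> 'z) \<Rightarrow> 'h) \<Rightarrow> 'k \<Rightarrow> real^'k \<Rightarrow> real" where
  "ebar M D N loss Alg k q =
     (\<integral>S. (\<integral>z. loss (Alg S) z \<partial>(D k)) \<partial>(PiM {..<N} (\<lambda>_. mixture M D q)))"

definition ffun :: "'z measure \<Rightarrow> ('k::finite \<Rightarrow> 'z measure) \<Rightarrow> nat \<Rightarrow> ('h \<Rightarrow> 'z \<Rightarrow> real)
    \<Rightarrow> ((nat \<Rightarrow> 'z) \<Rightarrow> 'h) \<Rightarrow> 'k \<Rightarrow> real^'k \<Rightarrow> real" where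
  "ffun M D N loss Alg k p = ebar M D N loss Alg k ((1 / mass p) *\<^sub>R p)"

definition Lsame :: "'z measure \<Rightarrow> ('k::finite \<Rightarrow> 'z measure) \<Rightarrow> nat \<Rightarrow> ('h \<Rightarrow> 'z \<Rightarrow> real)
    \<Rightarrow> ((nat \<Rightarrow> 'z) \<Rightarrow> 'h) \<Rightarrow> real^'k \<Rightarrow> real" where
  "Lsame M D N loss Alg p = (\<Sum>k\<in>UNIV. p$k * ffun M D N loss Alg k p)"

definition conservation :: "'z measure \<Rightarrow> ('k::finite \<Rightarrow> 'z measure) \<Rightarrow> nat \<Rightarrow> ('h \<Rightarrow> 'z \<Rightarrow> real)
    \<Rightarrow> ((nat \<Rightarrow> 'z) \<Rightarrow> 'h) \<Rightarrow> bool" where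
  "conservation M D N loss Alg \<longleftrightarrow>
     (\<forall>p\<in>posorth. (Lsame M D N loss Alg has_derivative
         (\<lambda>h. \<Sum>k\<in>UNIV. ffun M D N loss Alg k p * h$k)) (at p within posorth))"

end

theory Submission
  imports Defs
begin

(*
  Write L p = sum_k p_k f_k(p). Since its a-th partial derivative f_a depends only on the share
  p_a / |p|, moving along the a-th axis changes L by the same amount at any two points with equal
  a-th coordinate and equal mass. Comparing y e_j + z e_b with (y + z) e_j in this way and
  differentiating in y gives, for distinct j, a, b (this is where K >= 3 is used),
    g_j(y / (z + t + y)) - g_j((z + y) / (z + t + y)) = g_j(y / (z + y)) - g_j(1),
  and the substitution y = x, z = 1 - x, t = 1/x' - 1 shows that G = g_j - g_j(1) turns products
  into sums on (0,1]. G is bounded: every mixture is dominated by K times the uniform mixture, so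
  the sample distributions are uniformly dominated and ebar is bounded on the simplex. A bounded
  G with G(x^n) = n G(x) vanishes, so every g_j is constant on (0,1]; then L is linear on the
  orthant, and its derivative at a vertex e_a in direction e_j yields g_j(0) = g_j(1).
  Conversely, constant g_k make L linear with gradient (g_k(1))_k.
*)

lemma sets_mixture [simp]: "sets (mixture M D q) = sets M"
  unfolding mixture_def by (simp add: sets_measure_of[OF sets.space_closed])

lemma space_mixture [simp]: "space (mixture M D q) = space M"
  unfolding mixture_def by (simp add: space_measure_of_conv)

lemma emeasure_mixture:
  fixes D :: "'k::finite \<Rightarrow> 'z measure"
  assumes "\<And>k. sets (D k) = sets M" and "A \<in> sets M"
  shows "emeasure (mixture M D q) A = (\<Sum>k\<in>UNIV. ennreal (q$k) * emeasure (D k) A)"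
  unfolding mixture_def
proof (rule emeasure_measure_of_sigma[OF sets.sigma_algebra_axioms _ _ assms(2)])
  show "positive (sets M) (\<lambda>A. \<Sum>k\<in>UNIV. ennreal (q$k) * emeasure (D k) A)"
    by (simp add: positive_def)
  show "countably_additive (sets M) (\<lambda>A. \<Sum>k\<in>UNIV. ennreal (q$k) * emeasure (D k) A)"
    unfolding countably_additive_def
  proof (intro allI impI)
    fix F :: "nat \<Rightarrow> 'z set"
    assume F: "range F \<subseteq> sets M" "disjoint_family F"
    have "(\<Sum>i. \<Sum>k\<in>UNIV. ennreal (q$k) * emeasure (D k) (F i))
        = (\<Sum>k\<in>UNIV. \<Sum>i. ennreal (q$k) * emeasure (D k) (F i))"
      by (rule suminf_sum) (rule summableI)
    also have "\<dots> = (\<Sum>k\<in>UNIV. ennreal (q$k) * emeasure (D k) (\<Union> (range F)))"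
      using F by (simp add: suminf_emeasure assms(1))
    finally show "(\<Sum>i. \<Sum>k\<in>UNIV. ennreal (q$k) * emeasure (D k) (F i))
        = (\<Sum>k\<in>UNIV. ennreal (q$k) * emeasure (D k) (\<Union> (range F)))" .
  qed
qed

lemma prob_space_mixture:
  fixes D :: "'k::finite \<Rightarrow> 'z measure"
  assumes q: "q \<in> prob_simplex" and sets_D: "\<And>k. sets (D k) = sets M"
    and prob: "\<And>k. prob_space (D k)"
  shows "prob_space (mixture M D q)"
proof
  have "\<And>k. emeasure (D k) (space M) = 1"
    using prob sets_eq_imp_space_eq[OF sets_D] prob_space.emeasure_space_1 by metis
  then have "emeasure (mixture M D q) (space M) = (\<Sum>k\<in>UNIV. ennreal (q$k))"
    by (simp add: emeasure_mixture[OF sets_D])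
  also have "\<dots> = 1"
    using q by (simp add: prob_simplex_def)
  finally show "emeasure (mixture M D q) (space (mixture M D q)) = 1"
    by simp
qed

lemma mixture_le_scale_measure:
  fixes D :: "'k::finite \<Rightarrow> 'z measure"
  assumes sets_D: "\<And>k. sets (D k) = sets M"
    and le: "\<And>k. q$k \<le> c * r$k" and q: "\<And>k. 0 \<le> q$k" and c: "0 \<le> c"
  shows "mixture M D q \<le> scale_measure (ennreal c) (mixture M D r)"
  unfolding le_measure_iff
proof (simp add: space_scale_measure le_fun_def, intro allI)
  fix A
  show "emeasure (mixture M D q) A \<le> ennreal c * emeasure (mixture M D r) A"
  proof (cases "A \<in> sets M")
    case A: True
    have "emeasure (mixture M D q) A = (\<Sum>k\<in>UNIV. ennreal (q$k) * emeasure (D k) A)"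
      by (rule emeasure_mixture[OF sets_D A])
    also have "\<dots> \<le> (\<Sum>k\<in>UNIV. ennreal c * ennreal (r$k) * emeasure (D k) A)"
      using le q c
      by (intro sum_mono mult_right_mono) (auto simp: ennreal_mult'[symmetric] intro: ennreal_leI)
    also have "\<dots> = ennreal c * emeasure (mixture M D r) A"
      by (simp add: emeasure_mixture[OF sets_D A] sum_distrib_left mult.assoc)
    finally show ?thesis .
  qed (simp add: emeasure_notin_sets)
qed

lemma nn_integral_PiM_le_scale_measure:
  fixes A B :: "'z measure" and I :: "'i set"
  assumes I: "finite I" and sets_eq: "sets A = sets B"
    and "sigma_finite_measure A" and "sigma_finite_measure B"
    and le: "A \<le> scale_measure c B"
    and h: "h \<in> borel_measurable (PiM I (\<lambda>_. B))"
  shows "(\<integral>\<^sup>+x. h x \<partial>PiM I (\<lambda>_. A)) \<le> c ^ card I * (\<integral>\<^sup>+x. h x \<partial>PiM I (\<lambda>_. B))"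
  using I h
proof (induction I arbitrary: h rule: finite_induct)
  case empty
  then show ?case by (simp add: PiM_empty)
next
  case (insert i I)
  interpret PA: product_sigma_finite "\<lambda>_. A" by (simp add: product_sigma_finite_def assms)
  interpret PB: product_sigma_finite "\<lambda>_. B" by (simp add: product_sigma_finite_def assms)
  have sets_PiM_eq: "sets (PiM J (\<lambda>_. A)) = sets (PiM J (\<lambda>_. B))" for J :: "'i set"
    by (rule sets_PiM_cong) (auto simp: sets_eq)
  have hB[measurable]: "h \<in> borel_measurable (PiM (insert i I) (\<lambda>_. B))" by fact
  then have hA: "h \<in> borel_measurable (PiM (insert i I) (\<lambda>_. A))"
    using measurable_cong_sets[OF sets_PiM_eq refl] by blast
  have slice_le: "(\<integral>\<^sup>+y. h (x(i := y)) \<partial>A) \<le> c * (\<integral>\<^sup>+y. h (x(i := y)) \<partial>B)"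
    if "x \<in> space (PiM I (\<lambda>_. A))" for x
  proof -
    have "x \<in> space (PiM I (\<lambda>_. B))"
      using that sets_eq_imp_space_eq[OF sets_PiM_eq[of I]] by simp
    then have "(\<lambda>y. h (x(i := y))) \<in> borel_measurable B"
      using measurable_comp[OF measurable_component_update hB] \<open>i \<notin> I\<close> by (simp add: comp_def)
    moreover have "(\<integral>\<^sup>+y. h (x(i := y)) \<partial>A) \<le> (\<integral>\<^sup>+y. h (x(i := y)) \<partial>scale_measure c B)"
      by (rule nn_integral_mono_measure) (simp_all add: sets_eq le)
    ultimately show ?thesis
      by (simp add: nn_integral_scale_measure)
  qed
  have "(\<integral>\<^sup>+x. h x \<partial>PiM (insert i I) (\<lambda>_. A))
      = (\<integral>\<^sup>+x. (\<integral>\<^sup>+y. h (x(i := y)) \<partial>A) \<partial>PiM I (\<lambda>_. A))"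
    by (rule PA.product_nn_integral_insert[OF insert(1,2) hA])
  also have "\<dots> \<le> (\<integral>\<^sup>+x. c * (\<integral>\<^sup>+y. h (x(i := y)) \<partial>B) \<partial>PiM I (\<lambda>_. A))"
    by (rule nn_integral_mono) (rule slice_le)
  also have "\<dots> \<le> c ^ card I * (\<integral>\<^sup>+x. c * (\<integral>\<^sup>+y. h (x(i := y)) \<partial>B) \<partial>PiM I (\<lambda>_. B))"
    by (rule insert.IH) measurable
  also have "\<dots> = c ^ card (insert i I) * (\<integral>\<^sup>+x. h x \<partial>PiM (insert i I) (\<lambda>_. B))"
    using insert(1,2)
    by (simp add: nn_integral_cmult PB.product_nn_integral_insert[OF insert(1,2) hB] mult_ac)
  finally show ?case .
qed

lemma ebar_bounded:
  fixes D :: "'k::finite \<Rightarrow> 'z measure"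
  assumes prob: "\<And>k. prob_space (D k)"
    and sets_D: "\<And>k. sets (D k) = sets M"
    and integ: "\<And>q k. q \<in> prob_simplex \<Longrightarrow>
        integrable (PiM {..<N} (\<lambda>_. mixture M D q) \<Otimes>\<^sub>M D k) (\<lambda>(S, z). loss (Alg S) z)"
  obtains C where "\<And>q. q \<in> prob_simplex \<Longrightarrow> \<bar>ebar M D N loss Alg k q\<bar> \<le> C"
proof -
  let ?u = "(\<chi> k. 1 / real CARD('k)) :: real^'k"
  let ?F = "\<lambda>S. \<integral>z. loss (Alg S) z \<partial>(D k)"
  let ?\<mu> = "\<lambda>q. PiM {..<N} (\<lambda>_. mixture M D q)"
  have u: "?u \<in> prob_simplex" by (simp add: prob_simplex_def)
  interpret U: prob_space "?\<mu> ?u"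
    by (rule prob_space_PiM) (rule prob_space_mixture[OF u sets_D prob])
  interpret DK: prob_space "D k" by (rule prob)
  interpret UD: pair_sigma_finite "?\<mu> ?u" "D k" ..
  have F: "integrable (?\<mu> ?u) ?F"
    using UD.integrable_fst'[OF integ[OF u]] by simp
  define C where "C = real CARD('k) ^ N * (\<integral>S. norm (?F S) \<partial>?\<mu> ?u)"
  have bound: "\<bar>ebar M D N loss Alg k q\<bar> \<le> C" if q: "q \<in> prob_simplex" for q
  proof -
    have q_le_1: "q$k \<le> 1" for k
      using q member_le_sum[of k UNIV "\<lambda>k. q$k"] by (auto simp: prob_simplex_def)
    have "(\<integral>\<^sup>+S. norm (?F S) \<partial>?\<mu> q) \<le> ennreal (real CARD('k)) ^ N * (\<integral>\<^sup>+S. norm (?F S) \<partial>?\<mu> ?u)"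
      using nn_integral_PiM_le_scale_measure[of "{..<N}" "mixture M D q" "mixture M D ?u"]
        prob_space_mixture[OF q sets_D prob] prob_space_mixture[OF u sets_D prob]
        mixture_le_scale_measure[OF sets_D, of q "real CARD('k)" ?u] q q_le_1 F
      by (auto simp: prob_space_imp_sigma_finite prob_simplex_def)
    also have "\<dots> = ennreal C"
      using nn_integral_eq_integral[OF integrable_norm[OF F]]
      by (simp add: C_def ennreal_mult ennreal_power)
    finally have "(\<integral>\<^sup>+S. norm (?F S) \<partial>?\<mu> q) \<le> ennreal C" .
    moreover have "0 \<le> C" by (simp add: C_def)
    ultimately have "(\<integral>S. norm (?F S) \<partial>?\<mu> q) \<le> C"
      by (rule integral_real_bounded[rotated])
    then show ?thesis
      using integral_norm_bound[of "?\<mu> q" ?F] unfolding ebar_def real_norm_def by linarith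
  qed
  then show ?thesis by (rule that)
qed

definition has_gradient_on_posorth :: "(real^'k::finite \<Rightarrow> real) \<Rightarrow> ('k \<Rightarrow> real^'k \<Rightarrow> real) \<Rightarrow> bool"
  where "has_gradient_on_posorth L f \<longleftrightarrow>
    (\<forall>p\<in>posorth. (L has_derivative (\<lambda>h. \<Sum>k\<in>UNIV. f k p * h$k)) (at p within posorth))"

lemma vec_nth_axis: "axis i x $ k = (if k = i then x else 0)"
  by (simp add: axis_def)

lemma axis_zero [simp]: "axis i 0 = 0"
  by (simp add: vec_eq_iff vec_nth_axis)

lemma sum_axis_nth_mult: "(\<Sum>k\<in>UNIV. axis i x $ k * c k) = x * c i" for x :: real
proof -
  have "(\<Sum>k\<in>UNIV. axis i x $ k * c k) = (\<Sum>k\<in>UNIV. if k = i then x * c k else 0)"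
    by (rule sum.cong) (simp_all add: vec_nth_axis)
  then show ?thesis
    by simp
qed

lemma mass_add [simp]: "mass (p + q) = mass p + mass q"
  by (simp add: mass_def sum.distrib)

lemma mass_axis [simp]: "mass (axis i x) = x"
  by (simp add: mass_def vec_nth_axis)

lemma mass_zero [simp]: "mass 0 = 0"
  by (simp add: mass_def)

lemma posorthI: "(\<And>k. 0 \<le> p$k) \<Longrightarrow> 0 < mass p \<Longrightarrow> p \<in> posorth"
  by (auto simp: posorth_def)

lemma posorth_nonneg: "p \<in> posorth \<Longrightarrow> 0 \<le> p$k"
  by (simp add: posorth_def)

lemma posorth_nth_le_mass: "p \<in> posorth \<Longrightarrow> p$k \<le> mass p"
  unfolding mass_def posorth_def by (auto intro!: member_le_sum)

lemma posorth_mass_pos: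
  assumes p: "p \<in> posorth"
  shows "0 < mass p"
proof -
  obtain k where "p$k \<noteq> 0"
    using p by (auto simp: posorth_def vec_eq_iff)
  then show ?thesis
    using posorth_nonneg[OF p, of k] posorth_nth_le_mass[OF p, of k] by linarith
qed

lemma posorth_share_bounds:
  assumes "p \<in> posorth"
  shows "0 \<le> p$k / mass p" "p$k / mass p \<le> 1"
  using posorth_nonneg[OF assms] posorth_nth_le_mass[OF assms] posorth_mass_pos[OF assms]
  by auto

lemma has_gradient_on_posorth_line:
  assumes grad: "has_gradient_on_posorth L f"
    and line: "\<And>s. s \<in> S \<Longrightarrow> p + s *\<^sub>R v \<in> posorth" and t: "t \<in> S"
  shows "((\<lambda>s. L (p + s *\<^sub>R v)) has_field_derivative (\<Sum>k\<in>UNIV. f k (p + t *\<^sub>R v) * v$k))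
    (at t within S)"
proof -
  have "(L has_derivative (\<lambda>h. \<Sum>k\<in>UNIV. f k (p + t *\<^sub>R v) * h$k))
      (at (p + t *\<^sub>R v) within posorth)"
    using grad line[OF t] by (simp add: has_gradient_on_posorth_def)
  then have "(L has_derivative (\<lambda>h. \<Sum>k\<in>UNIV. f k (p + t *\<^sub>R v) * h$k))
      (at (p + t *\<^sub>R v) within (\<lambda>s. p + s *\<^sub>R v) ` S)"
    by (rule has_derivative_subset) (use line in blast)
  then have "((\<lambda>s. L (p + s *\<^sub>R v)) has_derivative
      (\<lambda>h. \<Sum>k\<in>UNIV. f k (p + t *\<^sub>R v) * (h *\<^sub>R v)$k)) (at t within S)"
    by (rule has_derivative_in_compose[rotated]) (auto intro!: derivative_eq_intros)
  then show ?thesis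
    unfolding has_field_derivative_def
    by (rule has_derivative_eq_rhs) (simp add: fun_eq_iff sum_distrib_left mult_ac)
qed

lemma has_gradient_on_posorth_axis:
  assumes grad: "has_gradient_on_posorth L f"
    and line: "\<And>s. s \<in> S \<Longrightarrow> p + axis j s \<in> posorth" and t: "t \<in> S"
  shows "((\<lambda>s. L (p + axis j s)) has_field_derivative f j (p + axis j t)) (at t within S)"
proof -
  have axis_eq: "axis j s = s *\<^sub>R axis j 1" for s :: real
    by (simp add: axis_def vec_eq_iff)
  have "(\<Sum>k\<in>UNIV. f k (p + axis j t) * axis j 1 $ k) = f j (p + axis j t)"
    by (simp add: vec_nth_axis if_distrib cong: if_cong)
  then show ?thesis
    using has_gradient_on_posorth_line[OF grad, of S p "axis j 1" t] line t
    by (simp only: axis_eq[symmetric])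
qed

lemma obtain_two_others:
  fixes j :: "'k::finite"
  assumes "CARD('k) \<ge> 3"
  obtains a b where "a \<noteq> j" "b \<noteq> j" "a \<noteq> b"
proof -
  have "2 \<le> card (UNIV - {j::'k})"
    using assms by (simp add: card_Diff_singleton)
  then obtain T where "T \<subseteq> UNIV - {j}" "card T = 2"
    by (rule obtain_subset_with_card_n)
  then show ?thesis
    using that by (auto simp: card_2_iff)
qed

lemma log_additive_bounded_imp_zero:
  fixes G :: "real \<Rightarrow> real"
  assumes add: "\<And>x y. 0 < x \<Longrightarrow> x \<le> 1 \<Longrightarrow> 0 < y \<Longrightarrow> y \<le> 1 \<Longrightarrow> G (x * y) = G x + G y"
    and bounded: "\<And>x. 0 < x \<Longrightarrow> x \<le> 1 \<Longrightarrow> \<bar>G x\<bar> \<le> C"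
    and x: "0 < x" "x \<le> 1"
  shows "G x = 0"
proof (rule ccontr)
  assume nonzero: "G x \<noteq> 0"
  have powers: "G (x ^ Suc n) = real (Suc n) * G x" for n
  proof (induction n)
    case (Suc n)
    have "G (x ^ Suc (Suc n)) = G (x * x ^ Suc n)"
      by simp
    also have "\<dots> = G x + G (x ^ Suc n)"
      using x power_le_one[of x "Suc n"] zero_less_power[of x "Suc n"] by (intro add) simp_all
    finally show ?case
      using Suc by (simp add: algebra_simps)
  qed simp
  obtain n :: nat where n: "C / \<bar>G x\<bar> < real n"
    using reals_Archimedean2 by blast
  have "real (Suc n) * \<bar>G x\<bar> \<le> C"
    using bounded[of "x ^ Suc n"] powers[of n] x power_le_one[of x "Suc n"]
    by (simp add: abs_mult del: power_Suc)
  moreover have "C < real n * \<bar>G x\<bar>"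
    using n nonzero by (simp add: divide_less_eq)
  ultimately show False
    by (simp add: algebra_simps)
qed

lemma has_field_derivative_unique_agree_on:
  assumes f: "(f has_field_derivative D) (at x within S)"
    and g: "(g has_field_derivative E) (at x within S)"
    and agree: "\<And>s. s \<in> S \<Longrightarrow> f s = g s" and x: "x \<in> S"
    and nontrivial: "at x within S \<noteq> bot"
  shows "D = E"
proof -
  have "(g has_field_derivative D) (at x within S)"
    by (rule has_field_derivative_transform_within[OF f zero_less_one x]) (simp add: agree)
  then show ?thesis
    using g nontrivial by (rule has_field_derivative_unique)
qed

locale share_determined =
  fixes f :: "'k::finite \<Rightarrow> real^'k \<Rightarrow> real" and g :: "'k \<Rightarrow> real \<Rightarrow> real"
  assumes f_eq_g: "p \<in> posorth \<Longrightarrow> f k p = g k (p$k / mass p)"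
begin

lemma diff_invariant_along_axis:
  assumes grad: "has_gradient_on_posorth L f"
    and P: "P \<in> posorth" and Q: "Q \<in> posorth"
    and same_nth: "P$a = Q$a" and same_mass: "mass P = mass Q" and t: "0 \<le> t"
  shows "L (P + axis a t) - L (Q + axis a t) = L P - L Q"
proof -
  have on_line: "X + axis a s \<in> posorth" if "X \<in> posorth" "s \<in> {0..}" for X s
    using that posorth_nonneg[OF that(1)] posorth_mass_pos[OF that(1)]
    by (intro posorthI) (auto simp: vec_nth_axis)
  have "((\<lambda>s. L (P + axis a s) - L (Q + axis a s)) has_field_derivative 0) (at s within {0..})"
    if s: "s \<in> {0..}" for s
  proof -
    have "f a (P + axis a s) = f a (Q + axis a s)"
      using f_eq_g[OF on_line[OF P s]] f_eq_g[OF on_line[OF Q s]] same_nth same_mass by simp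
    then show ?thesis
      using DERIV_diff[OF has_gradient_on_posorth_axis[OF grad, of "{0..}" P a s]
          has_gradient_on_posorth_axis[OF grad, of "{0..}" Q a s]] on_line P Q s
      by simp
  qed
  then obtain c where "\<forall>s\<in>{0..}. L (P + axis a s) - L (Q + axis a s) = c"
    using has_field_derivative_zero_constant[of "{0::real..}"] by blast
  from this[rule_format, of t] this[rule_format, of 0] t show ?thesis
    by simp
qed

lemma share_cross_identity:
  assumes grad: "has_gradient_on_posorth L f"
    and distinct: "a \<noteq> j" "b \<noteq> j" "a \<noteq> b" and t: "0 \<le> t" and z: "0 \<le> z" and y: "0 < y"
  shows "g j (y / (z + t + y)) - g j ((z + y) / (z + t + y)) = g j (y / (z + y)) - g j 1"
proof -
  define X1 where "X1 = axis b z + axis a t"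
  define X2 where "X2 = axis j z + axis a t"
  define X3 where "X3 = axis b z"
  define X4 where "X4 = axis j z"
  define \<phi> where
    "\<phi> s = L (X1 + axis j s) - L (X2 + axis j s) - (L (X3 + axis j s) - L (X4 + axis j s))" for s
  note defs = X1_def X2_def X3_def X4_def
  have yS: "y \<in> {0<..}"
    using y by simp
  have on_line: "X1 + axis j s \<in> posorth" "X2 + axis j s \<in> posorth"
      "X3 + axis j s \<in> posorth" "X4 + axis j s \<in> posorth" if "s \<in> {0<..}" for s
    using that t z by (auto intro!: posorthI simp: defs vec_nth_axis)
  have \<phi>_zero: "\<phi> s = 0" if s: "s \<in> {0<..}" for s
  proof -
    have "L ((X3 + axis j s) + axis a t) - L ((X4 + axis j s) + axis a t)
        = L (X3 + axis j s) - L (X4 + axis j s)"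
      using distinct s z t on_line(3,4)[OF s]
      by (intro diff_invariant_along_axis[OF grad]) (auto simp: defs vec_nth_axis)
    then show ?thesis
      by (simp add: \<phi>_def defs ac_simps)
  qed
  have \<phi>_deriv: "(\<phi> has_field_derivative
      f j (X1 + axis j y) - f j (X2 + axis j y) - (f j (X3 + axis j y) - f j (X4 + axis j y)))
      (at y within {0<..})" (is "(_ has_field_derivative ?D) _")
    unfolding \<phi>_def
    by (intro DERIV_diff has_gradient_on_posorth_axis[OF grad _ yS] on_line)
  have "?D = 0"
    using has_field_derivative_unique_agree_on[OF \<phi>_deriv DERIV_const \<phi>_zero yS]
    by (simp add: at_within_open[OF yS])
  moreover have "f j (X1 + axis j y) = g j (y / (z + t + y))"
    using f_eq_g[OF on_line(1)[OF yS]] distinct by (simp add: defs vec_nth_axis)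
  moreover have "f j (X2 + axis j y) = g j ((z + y) / (z + t + y))"
    using f_eq_g[OF on_line(2)[OF yS]] distinct by (simp add: defs vec_nth_axis)
  moreover have "f j (X3 + axis j y) = g j (y / (z + y))"
    using f_eq_g[OF on_line(3)[OF yS]] distinct by (simp add: defs vec_nth_axis)
  moreover have "f j (X4 + axis j y) = g j 1"
    using f_eq_g[OF on_line(4)[OF yS]] y z by (simp add: defs vec_nth_axis)
  ultimately show ?thesis
    by simp
qed

lemma g_log_additive:
  assumes grad: "has_gradient_on_posorth L f" and card: "CARD('k) \<ge> 3"
    and x: "0 < x" "x \<le> 1" and y: "0 < y" "y \<le> 1"
  shows "g j (x * y) - g j 1 = (g j x - g j 1) + (g j y - g j 1)"
proof -
  obtain a b where distinct: "a \<noteq> j" "b \<noteq> j" "a \<noteq> b"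
    using obtain_two_others[OF card] by blast
  have "0 \<le> 1 / y - 1"
    using y by simp
  then have "g j (x / ((1 - x) + (1 / y - 1) + x))
      - g j (((1 - x) + x) / ((1 - x) + (1 / y - 1) + x)) = g j (x / ((1 - x) + x)) - g j 1"
    using x by (intro share_cross_identity[OF grad distinct]) auto
  moreover have "(1 - x) + (1 / y - 1) + x = 1 / y"
    by simp
  ultimately show ?thesis
    using y by simp
qed

lemma g_eq_g_one_if_bounded:
  assumes grad: "has_gradient_on_posorth L f" and card: "CARD('k) \<ge> 3"
    and bounded: "\<And>x. 0 < x \<Longrightarrow> x \<le> 1 \<Longrightarrow> \<bar>g j x\<bar> \<le> C"
    and x: "0 < x" "x \<le> 1"
  shows "g j x = g j 1"
proof -
  have "\<bar>g j y - g j 1\<bar> \<le> 2 * C" if "0 < y" "y \<le> 1" for y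
    using bounded[OF that] bounded[of 1] by linarith
  then have "g j x - g j 1 = 0"
    using log_additive_bounded_imp_zero[of "\<lambda>x. g j x - g j 1" "2 * C" x]
      g_log_additive[OF grad card] x by blast
  then show ?thesis
    by simp
qed

lemma potential_eq_linear:
  assumes const: "\<And>k x. 0 < x \<Longrightarrow> x \<le> 1 \<Longrightarrow> g k x = g k 1" and p: "p \<in> posorth"
  shows "(\<Sum>k\<in>UNIV. p$k * f k p) = (\<Sum>k\<in>UNIV. p$k * g k 1)"
proof (rule sum.cong[OF refl])
  fix k
  show "p$k * f k p = p$k * g k 1"
  proof (cases "p$k = 0")
    case False
    then have "0 < p$k / mass p"
      using posorth_nonneg[OF p, of k] posorth_mass_pos[OF p] by simp
    then show ?thesis
      using f_eq_g[OF p] const[OF _ posorth_share_bounds(2)[OF p]] by simp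
  qed simp
qed

lemma g_zero_eq_g_one:
  assumes grad: "has_gradient_on_posorth (\<lambda>p. \<Sum>k\<in>UNIV. p$k * f k p) f"
    and const: "\<And>k x. 0 < x \<Longrightarrow> x \<le> 1 \<Longrightarrow> g k x = g k 1" and other: "a \<noteq> j"
  shows "g j 0 = g j 1"
proof -
  have on_line: "axis a 1 + axis j s \<in> posorth" if "s \<in> {0..}" for s
    using that other by (auto intro!: posorthI simp: vec_nth_axis)
  have linear: "(\<Sum>k\<in>UNIV. (axis a 1 + axis j s)$k * f k (axis a 1 + axis j s))
      = g a 1 + s * g j 1" if "s \<in> {0..}" for s
    using potential_eq_linear[OF const on_line[OF that]]
    by (simp add: distrib_right sum.distrib sum_axis_nth_mult)
  have "f j (axis a 1 + axis j 0) = g j 0"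
    using f_eq_g[OF on_line[of 0]] other by (simp add: vec_nth_axis)
  moreover have "((\<lambda>s. \<Sum>k\<in>UNIV. (axis a 1 + axis j s)$k * f k (axis a 1 + axis j s))
      has_field_derivative f j (axis a 1 + axis j 0)) (at 0 within {0..})"
    by (rule has_gradient_on_posorth_axis[OF grad on_line]) simp_all
  ultimately have potential_deriv:
    "((\<lambda>s. \<Sum>k\<in>UNIV. (axis a 1 + axis j s)$k * f k (axis a 1 + axis j s))
      has_field_derivative g j 0) (at 0 within {0..})"
    by simp
  have linear_deriv: "((\<lambda>s. g a 1 + s * g j 1) has_field_derivative g j 1) (at 0 within {0..})"
    by (auto intro!: derivative_eq_intros)
  have nontrivial: "at (0::real) within {0..} \<noteq> bot"
    by (simp add: at_within_Ici_at_right)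
  show ?thesis
    by (rule has_field_derivative_unique_agree_on[OF potential_deriv linear_deriv linear _ nontrivial])
      simp_all
qed

lemma has_gradient_on_posorth_if_const:
  assumes const: "\<And>k x. 0 \<le> x \<Longrightarrow> x \<le> 1 \<Longrightarrow> g k x = g k 1"
  shows "has_gradient_on_posorth (\<lambda>p. \<Sum>k\<in>UNIV. p$k * f k p) f"
  unfolding has_gradient_on_posorth_def
proof
  fix p :: "real^'k"
  assume p: "p \<in> posorth"
  have "((\<lambda>q. \<Sum>k\<in>UNIV. q$k * g k 1) has_derivative (\<lambda>h. \<Sum>k\<in>UNIV. h$k * g k 1))
      (at p within posorth)"
    by (intro bounded_linear_imp_has_derivative bounded_linear_sum bounded_linear_mult_const
        bounded_linear_vec_nth)
  then have "((\<lambda>q. \<Sum>k\<in>UNIV. q$k * f k q) has_derivative (\<lambda>h. \<Sum>k\<in>UNIV. h$k * g k 1))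
      (at p within posorth)"
    by (rule has_derivative_transform_within[OF _ zero_less_one p])
      (simp add: potential_eq_linear[OF const])
  moreover have "f k p = g k 1" for k
    using f_eq_g[OF p] const[OF posorth_share_bounds[OF p]] by simp
  ultimately show "((\<lambda>q. \<Sum>k\<in>UNIV. q$k * f k q) has_derivative (\<lambda>h. \<Sum>k\<in>UNIV. f k p * h$k))
      (at p within posorth)"
    by (simp add: mult.commute)
qed

lemma g_bounded:
  assumes bounded: "\<And>q. q \<in> prob_simplex \<Longrightarrow> \<bar>f j q\<bar> \<le> C"
    and other: "a \<noteq> j" and x: "0 \<le> x" "x \<le> 1"
  shows "\<bar>g j x\<bar> \<le> C"
proof -
  define q where "q = axis j x + axis a (1 - x)"
  have nonneg: "\<forall>k. 0 \<le> q$k" and mass: "mass q = 1" and nth: "q$j = x"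
    using x other by (simp_all add: q_def vec_nth_axis)
  then have "q \<in> posorth"
    by (intro posorthI) auto
  moreover have "q \<in> prob_simplex"
    using nonneg mass by (simp add: prob_simplex_def mass_def)
  ultimately show ?thesis
    using bounded f_eq_g[of q j] mass nth by fastforce
qed

lemma g_const_if_has_gradient:
  assumes grad: "has_gradient_on_posorth (\<lambda>p. \<Sum>k\<in>UNIV. p$k * f k p) f"
    and card: "CARD('k) \<ge> 3"
    and bounded: "\<And>j. \<exists>C. \<forall>q\<in>prob_simplex. \<bar>f j q\<bar> \<le> C"
    and x: "0 \<le> x" "x \<le> 1"
  shows "g j x = g j 1"
proof -
  have pos: "g k y = g k 1" if "0 < y" "y \<le> 1" for k y
  proof -
    obtain C where C: "\<And>q. q \<in> prob_simplex \<Longrightarrow> \<bar>f k q\<bar> \<le> C"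
      using bounded by blast
    obtain a b where a: "a \<noteq> k" "b \<noteq> k" "a \<noteq> b"
      by (rule obtain_two_others[OF card])
    have "\<bar>g k y'\<bar> \<le> C" if "0 < y'" "y' \<le> 1" for y'
      by (rule g_bounded[OF C a(1)]) (use that in auto)
    then show ?thesis
      by (rule g_eq_g_one_if_bounded[OF grad card _ that])
  qed
  show ?thesis
  proof (cases "x = 0")
    case True
    obtain a b where "a \<noteq> j" "b \<noteq> j" "a \<noteq> b"
      by (rule obtain_two_others[OF card])
    then show ?thesis
      using g_zero_eq_g_one[OF grad pos \<open>a \<noteq> j\<close>] True by simp
  next
    case False
    show ?thesis
      by (rule pos) (use False x in auto)
  qed
qed

end

lemma ffun_eq_ebar: "q \<in> prob_simplex \<Longrightarrow> ffun M D N loss Alg k q = ebar M D N loss Alg k q"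
  by (simp add: ffun_def prob_simplex_def mass_def)

theorem lemma7p3:
  fixes M :: "'z measure" and D :: "'k::finite \<Rightarrow> 'z measure" and N :: nat
    and loss :: "'h \<Rightarrow> 'z \<Rightarrow> real" and Alg :: "(nat \<Rightarrow> 'z) \<Rightarrow> 'h"
    and g :: "'k \<Rightarrow> real \<Rightarrow> real"
  assumes K3: "CARD('k) \<ge> 3"
    and N1: "N \<ge> 1"
    and prob: "\<And>k. prob_space (D k)"
    and sets_D: "\<And>k. sets (D k) = sets M"
    and integ: "\<And>q k. q \<in> prob_simplex \<Longrightarrow>
        integrable (PiM {..<N} (\<lambda>_. mixture M D q) \<Otimes>\<^sub>M D k) (\<lambda>(S, z). loss (Alg S) z)"
    and g_rep: "\<And>k p. p \<in> posorth \<Longrightarrow> ffun M D N loss Alg k p = g k (p$k / mass p)"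
  shows "conservation M D N loss Alg \<longleftrightarrow> (\<forall>k. \<exists>c. \<forall>x\<in>{0..1}. g k x = c)"
proof -
  let ?f = "ffun M D N loss Alg"
  interpret share_determined ?f g
    by unfold_locales (rule g_rep)
  have conservation_iff: "conservation M D N loss Alg \<longleftrightarrow>
      has_gradient_on_posorth (\<lambda>p. \<Sum>k\<in>UNIV. p$k * ?f k p) ?f"
    unfolding conservation_def has_gradient_on_posorth_def Lsame_def[abs_def] ..
  have bounded: "\<exists>C. \<forall>q\<in>prob_simplex. \<bar>?f j q\<bar> \<le> C" for j
  proof -
    obtain C where "\<And>q. q \<in> prob_simplex \<Longrightarrow> \<bar>ebar M D N loss Alg j q\<bar> \<le> C"
      using ebar_bounded[OF prob sets_D integ, where k = j] by blast
    then show ?thesis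
      by (auto simp: ffun_eq_ebar)
  qed
  show ?thesis
  proof
    assume "conservation M D N loss Alg"
    then have "has_gradient_on_posorth (\<lambda>p. \<Sum>k\<in>UNIV. p$k * ?f k p) ?f"
      using conservation_iff by blast
    then have "g k x = g k 1" if "x \<in> {0..1}" for k x
      using that by (intro g_const_if_has_gradient[OF _ K3 bounded]) auto
    then show "\<forall>k. \<exists>c. \<forall>x\<in>{0..1}. g k x = c"
      by blast
  next
    assume const: "\<forall>k. \<exists>c. \<forall>x\<in>{0..1}. g k x = c"
    have "g k x = g k 1" if "0 \<le> x" "x \<le> 1" for k x
    proof -
      obtain c where "\<forall>x\<in>{0..1}. g k x = c"
        using const by blast
      then show ?thesis
        using that by simp
    qed
    then show "conservation M D N loss Alg"
      using has_gradient_on_posorth_if_const conservation_iff by blast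
  qed
qed

end
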